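(* Fix $\alpha>0$ and a threshold $\epsilon\in(0,1)$. Under the MVP-IBP model with $p$ features, let $\pi_j=\Phi(\beta_j)$ be the marginal occurrence probability of feature $j$, and let $c^{(\epsilon)}=\sum_{j=1}^p\mathds{1}(\pi_j>\epsilon)$ be the number of common features at threshold $\epsilon$. Then $$\lim_{p\to\infty}E(c^{(\epsilon)})=\alpha\exp\left\{-\Phi^{-1}(\epsilon)-\frac12\right\}.$$
   Context: MVP-IBP model with $p$ features: for $i=1,\dots,n$ and $j=1,\dots,p$, $y_{ij}=\mathds{1}(z_{ij}>0)$, $z_{ij}=\beta_j+\varepsilon_{ij}$, where $\beta_1,\dots,\beta_p$ are i.i.d. $N(\mu_p,\tau_p^2)$, the vectors $\bm{\varepsilon}_i$ are i.i.d. $N_p(\bm{0},\bm{\Sigma})$ independent of $\bm\beta$, with $\bm{\Sigma}$ a $p\times p$ positive definite correlation matrix, and $\tau_p=\sqrt{2\log p}$, $\mu_p=\sqrt{1+\tau_p^2}\,\Phi^{-1}\!\left(\frac{\alpha}{\alpha+p}\right)$, where $\Phi$ is the standard normal CDF. Marginally $\mathrm{pr}(y_{ij}=1\mid\beta_j)=\Phi(\beta_j)$. *)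

theory Defs
  imports "HOL-Probability.Probability"
begin

definition Phi :: "real \<Rightarrow> real" where
  "Phi x = measure (density lborel std_normal_density) {..x}"

definition Phi_inv :: "real \<Rightarrow> real" where
  "Phi_inv q = (THE x. Phi x = q)"

definition tau_p :: "nat \<Rightarrow> real" where
  "tau_p p = sqrt (2 * ln (real p))"

definition mu_p :: "real \<Rightarrow> nat \<Rightarrow> real" where
  "mu_p \<alpha> p = sqrt (1 + (tau_p p)\<^sup>2) * Phi_inv (\<alpha> / (\<alpha> + real p))"

end

(*
  Each feature is common iff beta_j > Phi_inv eps, so the expected count is
  p (1 - Phi t_p) with t_p = (Phi_inv eps - mu_p) / tau_p.  Write mu_p = - sqrt (1 + tau_p^2) x_p,
  where x_p is the upper quantile 1 - Phi x_p = alpha / (alpha + p).  Since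
  x_p^2 ~ -2 ln (1 - Phi x_p) ~ 2 ln p = tau_p^2, the standardized threshold satisfies
  t_p^2 - x_p^2 -> 2 Phi_inv eps + 1.  By Mills' ratio 1 - Phi u ~ phi u / u, hence
  (1 - Phi t_p) / (1 - Phi x_p) -> exp (- Phi_inv eps - 1/2), while p (1 - Phi x_p) -> alpha.
*)
theory Submission
  imports Defs "HOL-Real_Asymp.Real_Asymp"
begin

interpretation std_normal: real_distribution std_normal_distribution
  by (rule real_dist_normal_dist)

lemma Phi_eq_cdf: "Phi = cdf std_normal_distribution"
  by (simp add: fun_eq_iff Phi_def cdf_def)

lemma emeasure_std_normal_distribution:
  "A \<in> sets borel \<Longrightarrow>
     emeasure std_normal_distribution A = (\<integral>\<^sup>+x\<in>A. std_normal_density x \<partial>lborel)"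
  by (simp add: emeasure_density)

lemma measure_std_normal_singleton: "measure std_normal_distribution {x} = 0"
  by (simp add: measure_def emeasure_std_normal_distribution nn_integral_null_set)

lemma isCont_Phi: "isCont Phi x"
  unfolding Phi_eq_cdf by (simp add: std_normal.isCont_cdf measure_std_normal_singleton)

lemma Phi_le_1: "Phi x \<le> 1"
  unfolding Phi_eq_cdf using std_normal.cdf_bounded_prob by simp

lemma measure_std_normal_greaterThan: "measure std_normal_distribution {t<..} = 1 - Phi t"
proof -
  have "{t<..} = space std_normal_distribution - {..t}" by auto
  then show ?thesis
    using std_normal.prob_compl[of "{..t}"] by (simp add: Phi_def)
qed

lemma nn_integral_std_normal_density_atLeast: "(\<integral>\<^sup>+x\<in>{t..}. std_normal_density x \<partial>lborel) = 1 - Phi t"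
proof -
  have "{t..} = {t} \<union> {t<..}" by auto
  then have "measure std_normal_distribution {t..} = 1 - Phi t"
    using std_normal.finite_measure_Union[of "{t}" "{t<..}"]
    by (simp add: measure_std_normal_singleton measure_std_normal_greaterThan)
  then show ?thesis
    by (simp flip: emeasure_std_normal_distribution add: std_normal.emeasure_eq_measure)
qed

lemma Phi_minus: "Phi (-t) = 1 - Phi t"
proof -
  have "ennreal (Phi (-t)) = (\<integral>\<^sup>+x\<in>{..-t}. std_normal_density x \<partial>lborel)"
    by (simp add: Phi_def std_normal.emeasure_eq_measure[symmetric] emeasure_density)
  also have "\<dots> = ennreal \<bar>-1\<bar> *
      (\<integral>\<^sup>+x. ennreal (std_normal_density (0 + -1 * x)) * indicator {..-t} (0 + -1 * x) \<partial>lborel)"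
    by (rule nn_integral_real_affine) auto
  also have "\<dots> = 1 - Phi t"
    by (simp flip: nn_integral_std_normal_density_atLeast add: std_normal_density_def indicator_def)
  finally show ?thesis
    using Phi_le_1[of t] by (simp add: Phi_eq_cdf std_normal.cdf_nonneg)
qed

lemma strict_mono_Phi: "strict_mono Phi"
proof (rule strict_monoI)
  fix x y :: real
  assume "x < y"
  have "emeasure std_normal_distribution {x<..y} \<noteq> 0"
  proof
    assume "emeasure std_normal_distribution {x<..y} = 0"
    then have "AE z in lborel. ennreal (std_normal_density z) * indicator {x<..y} z = 0"
      by (simp add: emeasure_std_normal_distribution nn_integral_0_iff_AE)
    then have "AE z in lborel. z \<notin> {x<..y}"
      by eventually_elim (auto simp: std_normal_density_def indicator_def)
    then have "emeasure lborel {x<..y} = 0"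
      by (subst (asm) AE_iff_measurable[of "{x<..y}"]) auto
    with \<open>x < y\<close> show False by simp
  qed
  then have "measure std_normal_distribution {x<..y} > 0"
    by (simp add: std_normal.emeasure_eq_measure zero_less_measure_iff)
  moreover have "Phi y - Phi x = measure std_normal_distribution {x<..y}"
    unfolding Phi_eq_cdf using \<open>x < y\<close> by (rule std_normal.cdf_diff_eq)
  ultimately show "Phi x < Phi y" by simp
qed

lemma Phi_less_1: "Phi x < 1"
  using strict_mono_Phi[THEN strict_monoD, of x "x + 1"] Phi_le_1[of "x + 1"] by simp

lemma Phi_Phi_inv:
  assumes "0 < a" "a < 1"
  shows "Phi (Phi_inv a) = a"
proof -
  have "\<forall>\<^sub>F x in at_bot. Phi x < a"
    using std_normal.cdf_lim_at_bot assms unfolding Phi_eq_cdf by (auto simp: order_tendsto_iff)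
  then obtain l where l: "Phi l < a"
    by (auto simp: eventually_at_bot_linorder)
  have "\<forall>\<^sub>F x in at_top. Phi x > a"
    using std_normal.cdf_lim_at_top_prob assms unfolding Phi_eq_cdf by (auto simp: order_tendsto_iff)
  then have "\<forall>\<^sub>F x in at_top. l \<le> x \<and> Phi x > a"
    using eventually_ge_at_top[of l] by eventually_elim simp
  then obtain u where u: "l \<le> u" "Phi u > a"
    by (auto simp: eventually_at_top_linorder)
  have "continuous_on {l..u} Phi"
    using isCont_Phi by (simp add: continuous_at_imp_continuous_on)
  then obtain x where x: "Phi x = a"
    using IVT'[of Phi l a u] l u by force
  then have "Phi_inv a = x"
    unfolding Phi_inv_def by (rule the_equality) (use x strict_mono_eq[OF strict_mono_Phi] in auto)
  with x show ?thesis by simp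
qed

lemma Phi_inv_less_iff:
  assumes "0 < a" "a < 1"
  shows "a < Phi b \<longleftrightarrow> Phi_inv a < b"
  using strict_mono_less[OF strict_mono_Phi, of "Phi_inv a" b] by (simp add: Phi_Phi_inv[OF assms])

lemma (in prob_space) prob_normal_greater:
  assumes X: "distributed M lborel X (normal_density \<mu> \<sigma>)" and "0 < \<sigma>"
  shows "prob {\<omega> \<in> space M. s < X \<omega>} = 1 - Phi ((s - \<mu>) / \<sigma>)"
proof -
  define r where "r = (s - \<mu>) / \<sigma>"
  have Z: "distributed M lborel (\<lambda>\<omega>. (X \<omega> - \<mu>) / \<sigma>) std_normal_density"
    using X normal_standard_normal_convert[OF \<open>0 < \<sigma>\<close>] by simp
  have "{\<omega> \<in> space M. s < X \<omega>} = (\<lambda>\<omega>. (X \<omega> - \<mu>) / \<sigma>) -` {r<..} \<inter> space M"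
    using \<open>0 < \<sigma>\<close> by (auto simp: r_def divide_less_cancel)
  then have "emeasure M {\<omega> \<in> space M. s < X \<omega>} = emeasure std_normal_distribution {r<..}"
    using distributed_emeasure[OF Z, of "{r<..}"] by (simp add: emeasure_density)
  then show ?thesis
    by (simp add: emeasure_eq_measure std_normal.emeasure_eq_measure measure_std_normal_greaterThan
        Phi_le_1 r_def)
qed

lemma (in prob_space) expectation_card_Phi_greater:
  assumes "0 < e" "e < 1" "0 < \<sigma>" "finite J"
    and X: "\<And>j. j \<in> J \<Longrightarrow> distributed M lborel (X j) (normal_density \<mu> \<sigma>)"
  shows "expectation (\<lambda>\<omega>. real (card {j \<in> J. e < Phi (X j \<omega>)}))
    = real (card J) * (1 - Phi ((Phi_inv e - \<mu>) / \<sigma>))"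
proof -
  define A where "A j = {\<omega> \<in> space M. Phi_inv e < X j \<omega>}" for j
  have [measurable]: "X j \<in> borel_measurable M" if "j \<in> J" for j
    using distributed_measurable[OF X[OF that]] by simp
  have A_sets: "A j \<in> events" if "j \<in> J" for j
    using that unfolding A_def by measurable
  have "expectation (\<lambda>\<omega>. real (card {j \<in> J. e < Phi (X j \<omega>)}))
      = expectation (\<lambda>\<omega>. \<Sum>j\<in>J. indicator (A j) \<omega>)"
  proof (intro Bochner_Integration.integral_cong refl)
    fix \<omega>
    assume "\<omega> \<in> space M"
    then have "{j \<in> J. e < Phi (X j \<omega>)} = J \<inter> {j. \<omega> \<in> A j}"
      by (auto simp: A_def Phi_inv_less_iff assms)
    moreover have "real (card (J \<inter> {j. \<omega> \<in> A j})) = (\<Sum>j\<in>J. indicator (A j) \<omega>)"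
      unfolding real_of_card sum.inter_restrict[OF \<open>finite J\<close>] by (simp add: indicator_def of_bool_def)
    ultimately show "real (card {j \<in> J. e < Phi (X j \<omega>)}) = (\<Sum>j\<in>J. indicator (A j) \<omega>)"
      by simp
  qed
  also have "\<dots> = (\<Sum>j\<in>J. prob (A j))"
    using A_sets by (subst Bochner_Integration.integral_sum)
      (auto simp: emeasure_eq_measure)
  also have "\<dots> = (\<Sum>j\<in>J. 1 - Phi ((Phi_inv e - \<mu>) / \<sigma>))"
    unfolding A_def using X \<open>0 < \<sigma>\<close> by (intro sum.cong refl prob_normal_greater)
  finally show ?thesis
    by simp
qed

lemma Phi_tail_upper_bound:
  assumes "0 < t"
  shows "1 - Phi t \<le> std_normal_density t / t"
proof -
  define c where "c = 1 / sqrt (2*pi)"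
  have density_eq: "std_normal_density x = c * exp (-x\<^sup>2/2)" for x
    by (simp add: c_def std_normal_density_def)
  define F where "F x = - (c * exp (-x\<^sup>2/2) / x)" for x :: real
  define f where "f x = std_normal_density x * (1 + 1/x\<^sup>2)" for x :: real
  have "DERIV F x :> f x" if "t \<le> x" for x
    using that assms unfolding F_def f_def density_eq
    by (auto intro!: derivative_eq_intros simp: field_simps power2_eq_square)
  moreover have "(F \<longlongrightarrow> 0) at_top"
    unfolding F_def by real_asymp
  ultimately have "(\<integral>\<^sup>+x\<in>{t..}. f x \<partial>lborel) = 0 - F t"
    by (intro nn_integral_FTC_atLeast) (auto simp: f_def)
  moreover have "std_normal_density x \<le> f x" for x
    using mult_left_mono[of 1 "1 + 1/x\<^sup>2" "std_normal_density x"] by (simp add: f_def)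
  then have "(\<integral>\<^sup>+x\<in>{t..}. std_normal_density x \<partial>lborel) \<le> (\<integral>\<^sup>+x\<in>{t..}. f x \<partial>lborel)"
    by (intro nn_integral_mono) (auto simp: indicator_def intro!: ennreal_leI)
  ultimately have "ennreal (1 - Phi t) \<le> ennreal (- F t)"
    by (simp add: nn_integral_std_normal_density_atLeast)
  moreover have "- F t = std_normal_density t / t"
    by (simp add: F_def density_eq)
  ultimately show ?thesis
    using assms Phi_less_1[of t] by (simp add: ennreal_le_iff2)
qed

lemma Phi_tail_lower_bound:
  assumes "2 \<le> t"
  shows "std_normal_density t * (1/t - 1/t^3) \<le> 1 - Phi t"
proof -
  define c where "c = 1 / sqrt (2*pi)"
  have density_eq: "std_normal_density x = c * exp (-x\<^sup>2/2)" for x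
    by (simp add: c_def std_normal_density_def)
  define F where "F x = - (c * exp (-x\<^sup>2/2) * (1/x - 1/x^3))" for x :: real
  define f where "f x = std_normal_density x * (1 - 3/x^4)" for x :: real
  have "DERIV F x :> f x" if "t \<le> x" for x
    using that assms unfolding F_def f_def density_eq
    by (auto intro!: derivative_eq_intros simp: field_simps power2_eq_square eval_nat_numeral)
  moreover have "0 \<le> f x" if "t \<le> x" for x
  proof -
    have "2^4 \<le> x^4"
      using that assms by (intro power_mono) auto
    then show ?thesis
      unfolding f_def by (simp add: divide_le_eq)
  qed
  moreover have "(F \<longlongrightarrow> 0) at_top"
    unfolding F_def by real_asymp
  ultimately have "(\<integral>\<^sup>+x\<in>{t..}. f x \<partial>lborel) = 0 - F t"
    by (intro nn_integral_FTC_atLeast) (auto simp: f_def)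
  moreover have "f x \<le> std_normal_density x" for x
    using mult_left_mono[of "1 - 3/x^4" 1 "std_normal_density x"] by (simp add: f_def)
  then have "(\<integral>\<^sup>+x\<in>{t..}. f x \<partial>lborel) \<le> (\<integral>\<^sup>+x\<in>{t..}. std_normal_density x \<partial>lborel)"
    by (intro nn_integral_mono) (auto simp: indicator_def intro!: ennreal_leI)
  ultimately have "ennreal (- F t) \<le> ennreal (1 - Phi t)"
    by (simp add: nn_integral_std_normal_density_atLeast)
  moreover have "- F t = std_normal_density t * (1/t - 1/t^3)"
    by (simp add: F_def density_eq)
  ultimately show ?thesis
    using Phi_le_1[of t] by simp
qed

lemma Phi_tail_asymp: "((\<lambda>u. (1 - Phi u) * u / std_normal_density u) \<longlongrightarrow> 1) at_top"
proof (rule tendsto_sandwich[of "\<lambda>u. 1 - 1/u\<^sup>2" _ _ "\<lambda>_. 1"])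
  have density_pos: "std_normal_density u > 0" for u
    by (simp add: std_normal_density_def)
  show "\<forall>\<^sub>F u in at_top. 1 - 1/u\<^sup>2 \<le> (1 - Phi u) * u / std_normal_density u"
    using eventually_ge_at_top[of 2]
  proof eventually_elim
    case (elim u)
    have "1 - 1/u\<^sup>2 = std_normal_density u * (1/u - 1/u^3) * u / std_normal_density u"
      using elim density_pos[of u] by (simp add: field_simps power2_eq_square eval_nat_numeral)
    also have "\<dots> \<le> (1 - Phi u) * u / std_normal_density u"
      using elim density_pos[of u] Phi_tail_lower_bound[OF elim]
      by (intro divide_right_mono mult_right_mono) auto
    finally show ?case .
  qed
  show "\<forall>\<^sub>F u in at_top. (1 - Phi u) * u / std_normal_density u \<le> 1"
    using eventually_gt_at_top[of 0]
  proof eventually_elim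
    case (elim u)
    then show ?case
      using Phi_tail_upper_bound[OF elim] density_pos[of u] by (simp add: le_divide_eq)
  qed
qed (real_asymp, simp)

lemma filterlim_at_top_if_Phi_tail_tendsto_0:
  assumes "((\<lambda>n. 1 - Phi (x n)) \<longlongrightarrow> 0) F"
  shows "filterlim x at_top F"
  unfolding filterlim_at_top_dense
proof
  fix z
  have "\<forall>\<^sub>F n in F. 1 - Phi (x n) < 1 - Phi z"
    using assms Phi_less_1[of z] by (intro order_tendstoD) auto
  then show "\<forall>\<^sub>F n in F. z < x n"
    by eventually_elim (simp add: strict_mono_less[OF strict_mono_Phi])
qed

lemma ln_Phi_tail_asymp: "((\<lambda>u. -2 * ln (1 - Phi u) / u\<^sup>2) \<longlongrightarrow> 1) at_top"
proof -
  define m where "m u = (1 - Phi u) * u / std_normal_density u" for u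
  have ln_m: "((\<lambda>u. ln (m u)) \<longlongrightarrow> ln 1) at_top"
    unfolding m_def by (intro tendsto_ln Phi_tail_asymp) simp
  have remainder: "((\<lambda>u. (2 * ln u + ln (2*pi)) / u\<^sup>2) \<longlongrightarrow> 0) at_top"
    by real_asymp
  have inverse_square: "((\<lambda>u::real. 1 / u\<^sup>2) \<longlongrightarrow> 0) at_top"
    by real_asymp
  have "((\<lambda>u. 1 + (2 * ln u + ln (2*pi)) / u\<^sup>2 - 2 * ln (m u) * (1 / u\<^sup>2)) \<longlongrightarrow> 1 + 0 - 2 * ln 1 * 0) at_top"
    by (intro tendsto_diff tendsto_add tendsto_mult tendsto_const ln_m remainder inverse_square)
  moreover have "\<forall>\<^sub>F u in at_top.
      1 + (2 * ln u + ln (2*pi)) / u\<^sup>2 - 2 * ln (m u) * (1 / u\<^sup>2) = -2 * ln (1 - Phi u) / u\<^sup>2"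
    using eventually_gt_at_top[of 0]
  proof eventually_elim
    case (elim u)
    have "0 < 1 - Phi u"
      using Phi_less_1[of u] by simp
    then have "ln (1 - Phi u) = ln (m u) - ln u - u\<^sup>2/2 - ln (2*pi) / 2"
      using elim by (simp add: m_def std_normal_density_def ln_mult ln_div ln_sqrt)
    then have "-2 * ln (1 - Phi u) = u\<^sup>2 + (2 * ln u + ln (2*pi)) - 2 * ln (m u)"
      by simp
    with elim show ?case
      by (simp add: diff_divide_distrib add_divide_distrib)
  qed
  ultimately show ?thesis
    by (simp add: tendsto_cong)
qed

lemma Phi_tail_ratio_tendsto:
  assumes x: "filterlim x at_top F" and t: "filterlim t at_top F"
    and square_diff: "((\<lambda>n. (t n)\<^sup>2 - (x n)\<^sup>2) \<longlongrightarrow> c) F"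
  shows "((\<lambda>n. (1 - Phi (t n)) / (1 - Phi (x n))) \<longlongrightarrow> exp (- c / 2)) F"
proof -
  define m where "m u = (1 - Phi u) * u / std_normal_density u" for u
  have m_t: "((\<lambda>n. m (t n)) \<longlongrightarrow> 1) F" and m_x: "((\<lambda>n. m (x n)) \<longlongrightarrow> 1) F"
    using filterlim_compose[OF Phi_tail_asymp t] filterlim_compose[OF Phi_tail_asymp x]
    by (simp_all add: m_def)
  have positive: "\<forall>\<^sub>F n in F. 0 < x n \<and> 0 < t n"
    using x t by (simp add: filterlim_at_top_dense eventually_conj)
  have "((\<lambda>n. sqrt (1 - ((t n)\<^sup>2 - (x n)\<^sup>2) * (inverse (t n))\<^sup>2)) \<longlongrightarrow> sqrt (1 - c * 0\<^sup>2)) F"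
    by (intro tendsto_intros square_diff tendsto_inverse_0_at_top t)
  moreover have "\<forall>\<^sub>F n in F. sqrt (1 - ((t n)\<^sup>2 - (x n)\<^sup>2) * (inverse (t n))\<^sup>2) = x n / t n"
    using positive
  proof eventually_elim
    case (elim n)
    then have "1 - ((t n)\<^sup>2 - (x n)\<^sup>2) * (inverse (t n))\<^sup>2 = (x n / t n)\<^sup>2"
      by (simp add: field_simps power2_eq_square)
    with elim show ?case
      by simp
  qed
  ultimately have x_over_t: "((\<lambda>n. x n / t n) \<longlongrightarrow> 1) F"
    by (simp add: tendsto_cong)
  have "((\<lambda>n. m (t n) / m (x n) * (x n / t n) * exp (- ((t n)\<^sup>2 - (x n)\<^sup>2) / 2))
      \<longlongrightarrow> 1 / 1 * 1 * exp (- c / 2)) F"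
    by (intro tendsto_intros m_t m_x x_over_t square_diff) simp_all
  moreover have "\<forall>\<^sub>F n in F. m (t n) / m (x n) * (x n / t n) * exp (- ((t n)\<^sup>2 - (x n)\<^sup>2) / 2)
      = (1 - Phi (t n)) / (1 - Phi (x n))"
    using positive
  proof eventually_elim
    case (elim n)
    have "std_normal_density (x n) * exp (- ((t n)\<^sup>2 - (x n)\<^sup>2) / 2) = std_normal_density (t n)"
      by (simp add: std_normal_density_def mult.assoc flip: exp_add) (simp add: field_simps)
    moreover have "0 < 1 - Phi (x n)" "0 < std_normal_density (t n)"
      using Phi_less_1[of "x n"] by (simp_all add: std_normal_density_def)
    ultimately show ?case
      using elim by (simp add: m_def field_simps)
  qed
  ultimately show ?thesis
    by (simp add: tendsto_cong)
qed

lemma Phi_upper_quantile_asymp: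
  assumes "0 < \<alpha>" and tail: "\<forall>\<^sub>F p in sequentially. 1 - Phi (x p) = \<alpha> / (\<alpha> + real p)"
  shows "filterlim x at_top sequentially"
    and "((\<lambda>p. x p / sqrt (2 * ln (real p))) \<longlongrightarrow> 1) sequentially"
proof -
  have "((\<lambda>p. \<alpha> / (\<alpha> + real p)) \<longlongrightarrow> 0) sequentially"
    by real_asymp
  then have "((\<lambda>p. 1 - Phi (x p)) \<longlongrightarrow> 0) sequentially"
    using tail by (simp add: tendsto_cong)
  then show x: "filterlim x at_top sequentially"
    by (rule filterlim_at_top_if_Phi_tail_tendsto_0)
  have "((\<lambda>p. -2 * ln (1 - Phi (x p)) / (x p)\<^sup>2) \<longlongrightarrow> 1) sequentially"
    using filterlim_compose[OF ln_Phi_tail_asymp x] .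
  moreover have "((\<lambda>p. -2 * ln (\<alpha> / (\<alpha> + real p)) / (2 * ln (real p))) \<longlongrightarrow> 1) sequentially"
    using \<open>0 < \<alpha>\<close> by real_asymp
  ultimately have "((\<lambda>p. (-2 * ln (\<alpha> / (\<alpha> + real p)) / (2 * ln (real p))) / (-2 * ln (1 - Phi (x p)) / (x p)\<^sup>2))
      \<longlongrightarrow> 1 / 1) sequentially"
    by (intro tendsto_divide) simp_all
  moreover have "\<forall>\<^sub>F p in sequentially.
      (-2 * ln (\<alpha> / (\<alpha> + real p)) / (2 * ln (real p))) / (-2 * ln (1 - Phi (x p)) / (x p)\<^sup>2)
      = (x p)\<^sup>2 / (2 * ln (real p))"
    using tail eventually_gt_at_top[of 0]
  proof eventually_elim
    case (elim p)
    have "ln (\<alpha> / (\<alpha> + real p)) < 0"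
      using \<open>0 < \<alpha>\<close> elim(2) by simp
    then show ?case
      by (simp add: elim(1))
  qed
  ultimately have "((\<lambda>p. sqrt ((x p)\<^sup>2 / (2 * ln (real p)))) \<longlongrightarrow> sqrt 1) sequentially"
    by (intro tendsto_real_sqrt) (simp add: tendsto_cong)
  moreover have "\<forall>\<^sub>F p in sequentially. sqrt ((x p)\<^sup>2 / (2 * ln (real p))) = x p / sqrt (2 * ln (real p))"
    using x[unfolded filterlim_at_top_dense, rule_format, of 0]
    by eventually_elim (simp add: real_sqrt_divide)
  ultimately show "((\<lambda>p. x p / sqrt (2 * ln (real p))) \<longlongrightarrow> 1) sequentially"
    by (simp add: tendsto_cong)
qed

lemma standardized_threshold_asymp:
  fixes q :: real
  assumes \<tau>: "filterlim \<tau> at_top F" and x_over_\<tau>: "((\<lambda>n. x n / \<tau> n) \<longlongrightarrow> 1) F"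
  defines "t n \<equiv> (q + sqrt (1 + (\<tau> n)\<^sup>2) * x n) / \<tau> n"
  shows "filterlim t at_top F" and "((\<lambda>n. (t n)\<^sup>2 - (x n)\<^sup>2) \<longlongrightarrow> 2 * q + 1) F"
proof -
  define s where "s n = sqrt (1 + (\<tau> n)\<^sup>2) / \<tau> n" for n
  have "((\<lambda>y::real. sqrt (1 + y\<^sup>2) / y) \<longlongrightarrow> 1) at_top"
    by real_asymp
  then have s: "(s \<longlongrightarrow> 1) F"
    unfolding s_def using filterlim_compose \<tau> by blast
  have q_over_\<tau>: "((\<lambda>n. q * inverse (\<tau> n)) \<longlongrightarrow> q * 0) F"
    by (intro tendsto_mult tendsto_const tendsto_inverse_0_at_top \<tau>)
  have \<tau>_pos: "\<forall>\<^sub>F n in F. 0 < \<tau> n"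
    using \<tau> by (simp add: filterlim_at_top_dense)
  have "\<forall>\<^sub>F n in F. x n / \<tau> n * \<tau> n = x n"
    using \<tau>_pos by eventually_elim simp
  with filterlim_tendsto_pos_mult_at_top[OF x_over_\<tau> zero_less_one \<tau>] order_refl order_refl
  have x: "filterlim x at_top F"
    by (rule filterlim_mono_eventually)
  have "\<forall>\<^sub>F n in F. q * inverse (\<tau> n) + s n * x n = t n"
    using \<tau>_pos by eventually_elim (simp add: t_def s_def field_simps)
  with filterlim_tendsto_add_at_top[OF q_over_\<tau> filterlim_tendsto_pos_mult_at_top[OF s zero_less_one x]]
    order_refl order_refl
  show "filterlim t at_top F"
    by (rule filterlim_mono_eventually)
  have "((\<lambda>n. (q * inverse (\<tau> n))\<^sup>2 + 2 * q * s n * (x n / \<tau> n) + (x n / \<tau> n)\<^sup>2)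
      \<longlongrightarrow> (q * 0)\<^sup>2 + 2 * q * 1 * 1 + 1\<^sup>2) F"
    by (intro tendsto_intros q_over_\<tau> s x_over_\<tau>)
  moreover have "\<forall>\<^sub>F n in F. (q * inverse (\<tau> n))\<^sup>2 + 2 * q * s n * (x n / \<tau> n) + (x n / \<tau> n)\<^sup>2
      = (t n)\<^sup>2 - (x n)\<^sup>2"
    using \<tau>_pos
  proof eventually_elim
    case (elim n)
    have "(sqrt (1 + (\<tau> n)\<^sup>2))\<^sup>2 = 1 + (\<tau> n)\<^sup>2"
      by simp
    with elim show ?case
      unfolding t_def s_def by (simp add: field_simps power2_eq_square)
  qed
  ultimately show "((\<lambda>n. (t n)\<^sup>2 - (x n)\<^sup>2) \<longlongrightarrow> 2 * q + 1) F"
    by (simp add: tendsto_cong)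
qed

lemma scaled_Phi_tail_tendsto:
  assumes "0 < \<alpha>"
  shows "(\<lambda>p. real p * (1 - Phi ((q - mu_p \<alpha> p) / tau_p p))) \<longlonglongrightarrow> \<alpha> * exp (- q - 1/2)"
proof -
  define x where "x p = - Phi_inv (\<alpha> / (\<alpha> + real p))" for p
  have tail: "\<forall>\<^sub>F p in sequentially. 1 - Phi (x p) = \<alpha> / (\<alpha> + real p)"
    using eventually_gt_at_top[of 0]
    by eventually_elim (use \<open>0 < \<alpha>\<close> in \<open>simp add: x_def Phi_minus[symmetric] Phi_Phi_inv\<close>)
  have x: "filterlim x at_top sequentially"
    using Phi_upper_quantile_asymp(1)[OF \<open>0 < \<alpha>\<close> tail] .
  have \<tau>: "filterlim tau_p at_top sequentially"
    unfolding tau_p_def[abs_def] by real_asymp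
  have x_over_\<tau>: "(\<lambda>p. x p / tau_p p) \<longlonglongrightarrow> 1"
    unfolding tau_p_def using Phi_upper_quantile_asymp(2)[OF \<open>0 < \<alpha>\<close> tail] .
  have threshold_eq: "(q - mu_p \<alpha> p) / tau_p p = (q + sqrt (1 + (tau_p p)\<^sup>2) * x p) / tau_p p" for p
    by (simp add: mu_p_def x_def)
  have exponent: "- (2 * q + 1) / 2 = - q - 1/2"
    by simp
  have "(\<lambda>p. (1 - Phi ((q - mu_p \<alpha> p) / tau_p p)) / (1 - Phi (x p))) \<longlonglongrightarrow> exp (- q - 1/2)"
    unfolding threshold_eq exponent[symmetric]
    by (intro Phi_tail_ratio_tendsto x standardized_threshold_asymp[OF \<tau> x_over_\<tau>])
  moreover have "(\<lambda>p. real p * (\<alpha> / (\<alpha> + real p))) \<longlonglongrightarrow> \<alpha>"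
    by real_asymp
  ultimately have "(\<lambda>p. real p * (\<alpha> / (\<alpha> + real p)) * ((1 - Phi ((q - mu_p \<alpha> p) / tau_p p)) / (1 - Phi (x p))))
      \<longlonglongrightarrow> \<alpha> * exp (- q - 1/2)"
    by (intro tendsto_mult)
  moreover have "\<forall>\<^sub>F p in sequentially.
      real p * (\<alpha> / (\<alpha> + real p)) * ((1 - Phi ((q - mu_p \<alpha> p) / tau_p p)) / (1 - Phi (x p)))
      = real p * (1 - Phi ((q - mu_p \<alpha> p) / tau_p p))"
    using tail by eventually_elim (use \<open>0 < \<alpha>\<close> in \<open>simp add: add_pos_nonneg\<close>)
  ultimately show ?thesis
    by (simp add: tendsto_cong)
qed

theorem proposition3:
  fixes \<alpha> \<epsilon> :: real
    and M :: "nat \<Rightarrow> 'a measure"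
    and \<beta> :: "nat \<Rightarrow> nat \<Rightarrow> 'a \<Rightarrow> real"
  assumes "\<alpha> > 0" and "0 < \<epsilon>" and "\<epsilon> < 1"
    and "\<And>p. p \<ge> 2 \<Longrightarrow> prob_space (M p)"
    and "\<And>p. p \<ge> 2 \<Longrightarrow> prob_space.indep_vars (M p) (\<lambda>_. borel) (\<beta> p) {1..p}"
    and "\<And>p j. p \<ge> 2 \<Longrightarrow> j \<in> {1..p} \<Longrightarrow>
           distributed (M p) lborel (\<beta> p j) (normal_density (mu_p \<alpha> p) (tau_p p))"
  shows "(\<lambda>p. prob_space.expectation (M p)
              (\<lambda>\<omega>. real (card {j \<in> {1..p}. Phi (\<beta> p j \<omega>) > \<epsilon>})))
         \<longlonglongrightarrow> \<alpha> * exp (- Phi_inv \<epsilon> - 1/2)"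
proof -
  have "\<forall>\<^sub>F p in sequentially.
      real p * (1 - Phi ((Phi_inv \<epsilon> - mu_p \<alpha> p) / tau_p p))
      = prob_space.expectation (M p) (\<lambda>\<omega>. real (card {j \<in> {1..p}. Phi (\<beta> p j \<omega>) > \<epsilon>}))"
    using eventually_ge_at_top[of 2]
  proof eventually_elim
    case (elim p)
    have "0 < tau_p p"
      using elim by (simp add: tau_p_def)
    then show ?case
      using prob_space.expectation_card_Phi_greater[OF assms(4)[OF elim] assms(2,3) \<open>0 < tau_p p\<close>
          finite_atLeastAtMost[of 1 p] assms(6)[OF elim]]
      by simp
  qed
  with scaled_Phi_tail_tendsto[OF \<open>\<alpha> > 0\<close>] show ?thesis
    by (rule Lim_transform_eventually)
qed

end
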